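(* Let $p\ge2$, $q\ge2$, and let $\mathcal M_{\mathrm{reg}}$, $\mathcal M_i$ and $\mathcal A_{\mathrm{class}}$ be as in the context. Let $\tilde a,\tilde b\in\mathcal M_{\mathrm{reg}}$ be such that there is no $i\in\{1,\dots,p\}$ with $\tilde a\in\mathcal M_i$ and $\tilde b\in\mathcal M_i$. Then some function in $\mathcal A_{\mathrm{class}}$ takes different values at $\tilde a$ and $\tilde b$.
   Context: Let $\Gamma=\mathbb{R}^{2(p+q)}$ with coordinates $(\boldsymbol u,\boldsymbol p,\boldsymbol v,\boldsymbol\pi)$, $\boldsymbol u,\boldsymbol p\in\mathbb{R}^p$, $\boldsymbol v,\boldsymbol\pi\in\mathbb{R}^q$. Let $\bar\Gamma$ be the set where $H_1=\tfrac12(\boldsymbol p^2-\boldsymbol v^2)$, $H_2=\tfrac12(\boldsymbol\pi^2-\boldsymbol u^2)$ and $D=\boldsymbol u\cdot\boldsymbol p-\boldsymbol v\cdot\boldsymbol\pi$ all vanish. ${\mathrm{SL}}(2,\mathbb{R})$ acts on $\Gamma$ by $(\boldsymbol u,\boldsymbol p)^T\mapsto g(\boldsymbol u,\boldsymbol p)^T$, $(\boldsymbol\pi,\boldsymbol v)^T\mapsto g(\boldsymbol\pi,\boldsymbol v)^T$ (acting componentwise on the pairs $(u_i,p_i)$, $(\pi_j,v_j)$), preserving $\bar\Gamma$. Let $\bar\Gamma_{\mathrm{reg}}$ be the set of points of $\bar\Gamma$ at which both pairs $(\boldsymbol u,\boldsymbol p)$ and $(\boldsymbol v,\boldsymbol\pi)$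 are linearly independent, and $\mathcal M_{\mathrm{reg}}=\bar\Gamma_{\mathrm{reg}}/{\mathrm{SL}}(2,\mathbb{R})$. For $x_k=(u_k,p_k)$ ($1\le k\le p$) and $x_{p+k}=(\pi_k,v_k)$ ($1\le k\le q$), set $\mathcal O_{kj}=x_k\times x_j$ (the scalar cross product on $\mathbb{R}^2$); these are gauge invariant, and $\mathcal A_{\mathrm{class}}$ is the algebra of functions on $\mathcal M_{\mathrm{reg}}$ generated by them. For $1\le i\le p$, $\mathcal M_i$ is the set of points of $\mathcal M_{\mathrm{reg}}$ having a representative satisfying $\boldsymbol u^2=\boldsymbol p^2=\boldsymbol v^2=\boldsymbol\pi^2>0$, $\boldsymbol u\cdot\boldsymbol p=\boldsymbol v\cdot\boldsymbol\pi=0$ and $u_i^2+p_i^2>0$. *)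

theory Defs
  imports "HOL-Analysis.Analysis"
begin

text \<open>A point of Gamma = R^(2(p+q)): coordinates (u, pp, v, pi) with u, pp in R^p and (pv = pi)
  v, pv in R^q.  The dimensions p and q are the cardinalities of the finite index types.\<close>
type_synonym ('p,'q) pt = "(real^'p) \<times> (real^'p) \<times> (real^'q) \<times> (real^'q)"

definition H1 :: "('p::finite,'q::finite) pt \<Rightarrow> real" where
  "H1 x = (case x of (u,pp,v,pv) \<Rightarrow> (pp \<bullet> pp - v \<bullet> v) / 2)"

definition H2 :: "('p::finite,'q::finite) pt \<Rightarrow> real" where
  "H2 x = (case x of (u,pp,v,pv) \<Rightarrow> (pv \<bullet> pv - u \<bullet> u) / 2)"

definition Dc :: "('p::finite,'q::finite) pt \<Rightarrow> real" where
  "Dc x = (case x of (u,pp,v,pv) \<Rightarrow> u \<bullet> pp - v \<bullet> pv)"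

definition Gamma_bar :: "('p::finite,'q::finite) pt set" where
  "Gamma_bar = {x. H1 x = 0 \<and> H2 x = 0 \<and> Dc x = 0}"

definition lin_indep2 :: "'a::real_vector \<Rightarrow> 'a \<Rightarrow> bool" where
  "lin_indep2 x y \<longleftrightarrow> (\<forall>a b. a *\<^sub>R x + b *\<^sub>R y = 0 \<longrightarrow> a = 0 \<and> b = 0)"

definition Gamma_reg :: "('p::finite,'q::finite) pt set" where
  "Gamma_reg = {x \<in> Gamma_bar. case x of (u,pp,v,pv) \<Rightarrow> lin_indep2 u pp \<and> lin_indep2 v pv}"

definition sl2_act :: "real^2^2 \<Rightarrow> ('p::finite,'q::finite) pt \<Rightarrow> ('p,'q) pt" where
  "sl2_act g x = (case x of (u,pp,v,pv) \<Rightarrow>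
     ((\<chi> i. g$1$1 * u$i + g$1$2 * pp$i),
      (\<chi> i. g$2$1 * u$i + g$2$2 * pp$i),
      (\<chi> j. g$2$1 * pv$j + g$2$2 * v$j),
      (\<chi> j. g$1$1 * pv$j + g$1$2 * v$j)))"

text \<open>The 2-vectors x_k = (u_k,p_k) (index Inl k) and x_{p+k} = (pi_k,v_k) (index Inr k).\<close>
definition xvec :: "('p::finite,'q::finite) pt \<Rightarrow> 'p + 'q \<Rightarrow> real \<times> real" where
  "xvec x k = (case x of (u,pp,v,pv) \<Rightarrow>
     (case k of Inl i \<Rightarrow> (u$i, pp$i) | Inr j \<Rightarrow> (pv$j, v$j)))"

definition cross2 :: "real \<times> real \<Rightarrow> real \<times> real \<Rightarrow> real" where
  "cross2 a b = fst a * snd b - snd a * fst b"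

definition Obs :: "'p + 'q \<Rightarrow> 'p + 'q \<Rightarrow> ('p::finite,'q::finite) pt \<Rightarrow> real" where
  "Obs k j x = cross2 (xvec x k) (xvec x j)"

text \<open>A_class: the (unital real) algebra of functions generated by the O_kj
  (functions on M_reg are represented by gauge-invariant functions evaluated at representatives).\<close>
inductive_set A_class :: "(('p::finite,'q::finite) pt \<Rightarrow> real) set" where
  gen: "Obs k j \<in> A_class"
| const: "(\<lambda>_. c) \<in> A_class"
| add: "f \<in> A_class \<Longrightarrow> g \<in> A_class \<Longrightarrow> (\<lambda>x. f x + g x) \<in> A_class"
| mult: "f \<in> A_class \<Longrightarrow> g \<in> A_class \<Longrightarrow> (\<lambda>x. f x * g x) \<in> A_class"

definition in_M :: "'p \<Rightarrow> ('p::finite,'q::finite) pt \<Rightarrow> bool" where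
  "in_M i x \<longleftrightarrow> x \<in> Gamma_reg \<and> (\<exists>g. det g = 1 \<and>
     (case sl2_act g x of (u,pp,v,pv) \<Rightarrow>
        u \<bullet> u = pp \<bullet> pp \<and> pp \<bullet> pp = v \<bullet> v \<and> v \<bullet> v = pv \<bullet> pv \<and> u \<bullet> u > 0 \<and>
        u \<bullet> pp = 0 \<and> v \<bullet> pv = 0 \<and> (u$i)^2 + (pp$i)^2 > 0))"

end

theory Submission
  imports Defs
begin

text \<open>Each \<open>\<M>\<^sub>i\<close> already contains every regular class whose pair \<open>(u\<^sub>i, p\<^sub>i)\<close> is nonzero:
  a lower triangular element of SL(2,R) orthonormalises the pair \<open>(u, p)\<close> up to a common
  scale \<open>\<surd>(|u|\<^sup>2|p|\<^sup>2 - (u\<cdot>p)\<^sup>2)\<close>, and the constraints force \<open>(\<pi>, v)\<close> to have the same Gram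
  matrix as \<open>(u, p)\<close>, so the same element normalises it too.  Since \<open>u, p\<close> are independent,
  some minor \<open>u\<^sub>i p\<^sub>j - p\<^sub>i u\<^sub>j = \<O>\<^sub>i\<^sub>j\<close> is nonzero at \<open>a\<close>, so \<open>a \<in> \<M>\<^sub>i\<close>; if \<open>\<O>\<^sub>i\<^sub>j\<close> took the
  same value at \<open>b\<close>, then \<open>(u\<^sub>i, p\<^sub>i) \<noteq> 0\<close> at \<open>b\<close> as well and \<open>b \<in> \<M>\<^sub>i\<close>.\<close>

lemma lin_indep2_imp_nonzero:
  assumes "lin_indep2 x y"
  shows "x \<noteq> 0"
proof
  assume "x = 0"
  then have "1 *\<^sub>R x + 0 *\<^sub>R y = 0" by simp
  with assms show False unfolding lin_indep2_def by fastforce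
qed

lemma lin_indep2_gram_det_pos:
  fixes x y :: "'a::real_inner"
  assumes "lin_indep2 x y"
  shows "(x \<bullet> x) * (y \<bullet> y) - (x \<bullet> y)\<^sup>2 > 0"
proof -
  define w where "w = (x \<bullet> x) *\<^sub>R y - (x \<bullet> y) *\<^sub>R x"
  have xx_pos: "x \<bullet> x > 0"
    using lin_indep2_imp_nonzero[OF assms] by simp
  have "w \<noteq> 0"
  proof
    assume "w = 0"
    then have "(- (x \<bullet> y)) *\<^sub>R x + (x \<bullet> x) *\<^sub>R y = 0"
      unfolding w_def by (simp add: algebra_simps)
    with assms xx_pos show False unfolding lin_indep2_def by fastforce
  qed
  moreover have "w \<bullet> w = (x \<bullet> x) * ((x \<bullet> x) * (y \<bullet> y) - (x \<bullet> y)\<^sup>2)"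
    unfolding w_def
    by (simp add: inner_diff_left inner_diff_right inner_commute power2_eq_square algebra_simps)
  ultimately have "(x \<bullet> x) * ((x \<bullet> x) * (y \<bullet> y) - (x \<bullet> y)\<^sup>2) > 0"
    by (metis inner_gt_zero_iff)
  with xx_pos show ?thesis
    using zero_less_mult_pos by fastforce
qed

lemma lin_indep2_vec_minor:
  fixes u p :: "real^'n"
  assumes "lin_indep2 u p"
  obtains i j where "u$i * p$j - p$i * u$j \<noteq> 0"
proof (rule ccontr)
  assume "\<not> thesis"
  with that have minors: "u$i * p$j - p$i * u$j = 0" for i j by blast
  obtain k where k: "u$k \<noteq> 0"
    using lin_indep2_imp_nonzero[OF assms] by (metis vec_eq_iff zero_index)
  have "(p$k / u$k) *\<^sub>R u + (-1) *\<^sub>R p = 0"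
    using minors[of k] k by (simp add: vec_eq_iff field_simps)
  with assms show False unfolding lin_indep2_def by fastforce
qed

definition act2 :: "real^2^2 \<Rightarrow> 'a::real_vector \<times> 'a \<Rightarrow> 'a \<times> 'a" where
  "act2 g xy = (g$1$1 *\<^sub>R fst xy + g$1$2 *\<^sub>R snd xy, g$2$1 *\<^sub>R fst xy + g$2$2 *\<^sub>R snd xy)"

lemma sl2_act_eq_act2:
  assumes "act2 g (u, p) = (u', p')" and "act2 g (pv, v) = (pv', v')"
  shows "sl2_act g (u, p, v, pv) = (u', p', v', pv')"
  using assms by (auto simp: act2_def sl2_act_def vec_eq_iff algebra_simps)

lemma act2_component:
  fixes x y :: "real^'n"
  assumes "act2 g (x, y) = (x', y')"
  shows "act2 g (x$i, y$i) = (x'$i, y'$i)"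
  using assms by (auto simp: act2_def)

lemma act2_eq_zeroD:
  assumes "det g \<noteq> 0" and "act2 g (x, y) = (0, 0)"
  shows "x = 0 \<and> y = 0"
proof -
  have eqs: "g$1$1 *\<^sub>R x + g$1$2 *\<^sub>R y = 0" "g$2$1 *\<^sub>R x + g$2$2 *\<^sub>R y = 0"
    using assms(2) by (auto simp: act2_def)
  have "det g *\<^sub>R x = g$2$2 *\<^sub>R (g$1$1 *\<^sub>R x + g$1$2 *\<^sub>R y) - g$1$2 *\<^sub>R (g$2$1 *\<^sub>R x + g$2$2 *\<^sub>R y)"
       "det g *\<^sub>R y = g$1$1 *\<^sub>R (g$2$1 *\<^sub>R x + g$2$2 *\<^sub>R y) - g$2$1 *\<^sub>R (g$1$1 *\<^sub>R x + g$1$2 *\<^sub>R y)"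
    by (simp_all add: det_2 algebra_simps)
  then have "det g *\<^sub>R x = 0" and "det g *\<^sub>R y = 0"
    unfolding eqs by simp_all
  with assms(1) show ?thesis by simp
qed

text \<open>Gram--Schmidt on a pair with Gram data \<open>A = x\<cdot>x\<close>, \<open>B = y\<cdot>y\<close>, \<open>C = x\<cdot>y\<close>, followed by
  the unimodular rescaling that gives both vectors squared length \<open>\<surd>(A B - C\<^sup>2)\<close>.\<close>
definition normalizing_matrix :: "real \<Rightarrow> real \<Rightarrow> real \<Rightarrow> real^2^2" where
  "normalizing_matrix A B C =
     (let \<alpha> = sqrt (sqrt (A * B - C\<^sup>2) / A)
      in vector [vector [\<alpha>, 0], vector [- C / (\<alpha> * A), 1 / \<alpha>]])"

lemma det_normalizing_matrix:
  assumes "A > 0" and "A * B - C\<^sup>2 > 0"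
  shows "det (normalizing_matrix A B C) = 1"
  using assms by (simp add: normalizing_matrix_def det_2 Let_def)

lemma act2_normalizing_matrix:
  fixes x y :: "'a::real_inner"
  assumes gram: "x \<bullet> x = A" "y \<bullet> y = B" "x \<bullet> y = C"
    and pos: "A > 0" "A * B - C\<^sup>2 > 0"
    and act: "act2 (normalizing_matrix A B C) (x, y) = (x', y')"
  shows "x' \<bullet> x' = sqrt (A * B - C\<^sup>2)" and "y' \<bullet> y' = sqrt (A * B - C\<^sup>2)" and "x' \<bullet> y' = 0"
proof -
  define s where "s = sqrt (A * B - C\<^sup>2)"
  define \<alpha> where "\<alpha> = sqrt (s / A)"
  have s_pos: "s > 0" and s_sq: "s * s = A * B - C\<^sup>2"
    using pos unfolding s_def by simp_all
  have \<alpha>_pos: "\<alpha> > 0" and \<alpha>_sq: "\<alpha> * \<alpha> = s / A"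
    using pos s_pos unfolding \<alpha>_def by simp_all
  have x': "x' = \<alpha> *\<^sub>R x" and y': "y' = (1 / \<alpha>) *\<^sub>R (y - (C / A) *\<^sub>R x)"
    using act pos by (auto simp: act2_def normalizing_matrix_def Let_def \<alpha>_def s_def algebra_simps)
  have "x' \<bullet> x' = \<alpha> * \<alpha> * A"
    unfolding x' using gram by simp
  then show "x' \<bullet> x' = s"
    using \<alpha>_sq pos by simp
  have "(y - (C / A) *\<^sub>R x) \<bullet> (y - (C / A) *\<^sub>R x) = (A * B - C\<^sup>2) / A"
    using gram pos
    by (simp add: inner_diff_left inner_diff_right inner_commute power2_eq_square field_simps)
  then have "y' \<bullet> y' = (A * B - C\<^sup>2) / (\<alpha> * \<alpha> * A)"
    unfolding y' by simp
  also have "\<dots> = s"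
    using \<alpha>_sq s_sq s_pos pos by (simp add: field_simps)
  finally show "y' \<bullet> y' = s" .
  show "x' \<bullet> y' = 0"
    unfolding x' y' using gram pos \<alpha>_pos by (simp add: inner_diff_right)
qed

lemma Gamma_reg_iff:
  "(u, p, v, pv) \<in> Gamma_reg \<longleftrightarrow>
     p \<bullet> p = v \<bullet> v \<and> pv \<bullet> pv = u \<bullet> u \<and> u \<bullet> p = v \<bullet> pv \<and> lin_indep2 u p \<and> lin_indep2 v pv"
  by (auto simp: Gamma_reg_def Gamma_bar_def H1_def H2_def Dc_def)

lemma Gamma_reg_in_M:
  assumes reg: "(u, p, v, pv) \<in> Gamma_reg" and nz: "(u$i, p$i) \<noteq> (0, 0)"
  shows "in_M i (u, p, v, pv)"
proof -
  define A B C where "A = u \<bullet> u" and "B = p \<bullet> p" and "C = u \<bullet> p"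
  define g where "g = normalizing_matrix A B C"
  have "lin_indep2 u p" and gram_\<pi>v: "pv \<bullet> pv = A" "v \<bullet> v = B" "pv \<bullet> v = C"
    using reg by (auto simp: Gamma_reg_iff A_def B_def C_def inner_commute)
  then have pos: "A > 0" "A * B - C\<^sup>2 > 0"
    using lin_indep2_imp_nonzero lin_indep2_gram_det_pos
    unfolding A_def B_def C_def by auto
  obtain u' p' where up: "act2 g (u, p) = (u', p')" by fastforce
  obtain pv' v' where \<pi>v: "act2 g (pv, v) = (pv', v')" by fastforce
  note norm_up = act2_normalizing_matrix[OF A_def[symmetric] B_def[symmetric] C_def[symmetric]
      pos up[unfolded g_def]]
  note norm_\<pi>v = act2_normalizing_matrix[OF gram_\<pi>v pos \<pi>v[unfolded g_def]]
  have det_g: "det g = 1"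
    unfolding g_def using det_normalizing_matrix[OF pos] .
  have "(u'$i, p'$i) \<noteq> (0, 0)"
    using act2_eq_zeroD[of g "u$i" "p$i"] act2_component[OF up] det_g nz by auto
  then have "(u'$i)\<^sup>2 + (p'$i)\<^sup>2 > 0"
    by (simp add: sum_power2_gt_zero_iff)
  moreover have "sqrt (A * B - C\<^sup>2) > 0"
    using pos by simp
  ultimately show ?thesis
    unfolding in_M_def using reg det_g sl2_act_eq_act2[OF up \<pi>v] norm_up norm_\<pi>v
    by (auto simp: inner_commute)
qed

lemma Obs_Inl_Inl:
  "Obs (Inl i) (Inl j) (u, p, v, pv) = u$i * p$j - p$i * u$j"
  by (simp add: Obs_def xvec_def cross2_def)

lemma Obs_Inl_nonzero_imp_in_M:
  assumes "x \<in> Gamma_reg" and "Obs (Inl i) (Inl j) x \<noteq> 0"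
  shows "in_M i x"
proof -
  obtain u p v pv where x: "x = (u, p, v, pv)"
    by (cases x) auto
  have "(u$i, p$i) \<noteq> (0, 0)"
    using assms(2) by (auto simp: x Obs_Inl_Inl)
  then show ?thesis
    using Gamma_reg_in_M assms(1) x by blast
qed

lemma Gamma_reg_Obs_nonzero:
  assumes "x \<in> Gamma_reg"
  obtains i j where "Obs (Inl i) (Inl j) x \<noteq> 0"
proof -
  obtain u p v pv where x: "x = (u, p, v, pv)"
    by (cases x) auto
  have "lin_indep2 u p"
    using assms by (simp add: x Gamma_reg_iff)
  then obtain i j where "u$i * p$j - p$i * u$j \<noteq> 0"
    by (rule lin_indep2_vec_minor)
  then show ?thesis
    using that by (simp add: x Obs_Inl_Inl)
qed

theorem mainTheorem4:
  fixes a b :: "('p::finite,'q::finite) pt"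
  assumes "CARD('p) \<ge> 2" and "CARD('q) \<ge> 2"
    and "a \<in> Gamma_reg" and "b \<in> Gamma_reg"
    and "\<not> (\<exists>i::'p. in_M i a \<and> in_M i b)"
  shows "\<exists>f \<in> A_class. f a \<noteq> f b"
proof -
  obtain i j where a_nz: "Obs (Inl i) (Inl j) a \<noteq> 0"
    using Gamma_reg_Obs_nonzero[OF assms(3)] .
  then have "in_M i a"
    using Obs_Inl_nonzero_imp_in_M assms(3) by blast
  then have "\<not> in_M i b"
    using assms(5) by blast
  then have "Obs (Inl i) (Inl j) b = 0"
    using Obs_Inl_nonzero_imp_in_M assms(4) by blast
  with a_nz show ?thesis
    by (intro bexI[of _ "Obs (Inl i) (Inl j)"] A_class.gen) simp
qed

end
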